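(* Let $n\ge2$, $m\ge1$, $q=2^m$, and let $\mathbf{H}_X^{(q)}$, $\mathbf{H}_Z^{(q)}$ be $q$-ary labelings of the toric Tanner graphs $\mathcal{G}_X$, $\mathcal{G}_Z$ (as in the context) with codes $\mathcal{C}_X^{(q)}$, $\mathcal{C}_Z^{(q)}$, such that every cycle of the labeled graph $\mathcal{G}_X$ has product $1$ and $(\mathcal{C}_Z^{(q)})^\perp\subset\mathcal{C}_X^{(q)}$. Then the minimum distance of the extended toric code $(\hat{\mathcal{C}}_X,\hat{\mathcal{C}}_Z)$, namely $\min\{\min\{|x|:x\in\hat{\mathcal{C}}_X\setminus\hat{\mathcal{C}}_Z^\perp\},\ \min\{|x|:x\in\hat{\mathcal{C}}_Z\setminus\hat{\mathcal{C}}_X^\perp\}\}$ (Hamming weights), is at least $n$.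
   Context: Indices are taken in $\mathbb{Z}_{2n}=\{0,\dots,2n-1\}$ with arithmetic mod $2n$. Variable nodes: $V=\{(i,j)\in\mathbb{Z}_{2n}^2: i+j\text{ even}\}$ ($2n^2$ nodes). $X$-checks: $C_X=\{(i,j): i\text{ odd}, j\text{ even}\}$; $Z$-checks: $C_Z=\{(i,j): i\text{ even}, j\text{ odd}\}$. Each check $(i,j)$ is adjacent to the variable nodes $(i\pm1,j)$, $(i,j\pm1)$; $\mathcal{G}_X$, $\mathcal{G}_Z$ are the bipartite graphs on $V\cup C_X$, $V\cup C_Z$. A $q$-ary labeling is $\mathbf{H}_X^{(q)}=(x_{c,v})\in\mathbb{F}_q^{C_X\times V}$ with $x_{c,v}\ne0$ iff $c,v$ adjacent, similarly $\mathbf{H}_Z^{(q)}\in\mathbb{F}_q^{C_Z\times V}$; $\mathcal{C}_X^{(q)}=\ker\mathbf{H}_X^{(q)}$, $\mathcal{C}_Z^{(q)}=\ker\mathbf{H}_Z^{(q)}$, $\perp$ w.r.t. the standard bilinear form. For a cycle $v_1,c_1,\dots,v_k,c_k,v_1$ of labeled $\mathcal{G}_X$ its product is $\prod_t x_{c_t v_{t+1}}x_{c_t v_t}^{-1}$. Extended toric code: fix an $\mathbb{F}_2$-basis of $\mathbb{F}_{2^m}$ and let $A:\mathbb{F}_{2^m}\to\mathbb{F}_2^{m\times m}$ send $a$ to the matrix of multiplication by $a$ in that basis. $\hat{\mathbf{H}}_X$ is obtained from $\mathbf{H}_X^{(q)}$ by replacing each entry $h$ by the block $A(h)$, and $\hat{\mathbf{H}}_Z$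 from $\mathbf{H}_Z^{(q)}$ by replacing each entry $h$ by $A(h)^T$ (zero entries become zero blocks); then $\hat{\mathbf{H}}_X\hat{\mathbf{H}}_Z^T=0$. $\hat{\mathcal{C}}_X=\ker\hat{\mathbf{H}}_X$, $\hat{\mathcal{C}}_Z=\ker\hat{\mathbf{H}}_Z\subset\mathbb{F}_2^{2mn^2}$, with $\perp$ the standard binary dual. *)

theory Defs
  imports Main "HOL-Library.Z2"
begin

definition tor_V :: "nat \<Rightarrow> (nat \<times> nat) set" where
  "tor_V n = {(i,j). i < 2*n \<and> j < 2*n \<and> even (i+j)}"

definition tor_CX :: "nat \<Rightarrow> (nat \<times> nat) set" where
  "tor_CX n = {(i,j). i < 2*n \<and> j < 2*n \<and> odd i \<and> even j}"

definition tor_CZ :: "nat \<Rightarrow> (nat \<times> nat) set" where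
  "tor_CZ n = {(i,j). i < 2*n \<and> j < 2*n \<and> even i \<and> odd j}"

definition tor_adj :: "nat \<Rightarrow> nat \<times> nat \<Rightarrow> nat \<times> nat \<Rightarrow> bool" where
  "tor_adj n c v \<longleftrightarrow>
     v \<in> {((fst c + 1) mod (2*n), snd c), ((fst c + 2*n - 1) mod (2*n), snd c),
          (fst c, (snd c + 1) mod (2*n)), (fst c, (snd c + 2*n - 1) mod (2*n))}"

definition labeling :: "nat \<Rightarrow> (nat \<times> nat) set \<Rightarrow> (nat \<times> nat \<Rightarrow> nat \<times> nat \<Rightarrow> 'a::field) \<Rightarrow> bool" where
  "labeling n C H \<longleftrightarrow> (\<forall>c\<in>C. \<forall>v\<in>tor_V n. H c v \<noteq> 0 \<longleftrightarrow> tor_adj n c v)"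

definition qcode :: "nat \<Rightarrow> (nat \<times> nat) set \<Rightarrow> (nat \<times> nat \<Rightarrow> nat \<times> nat \<Rightarrow> 'a::field)
     \<Rightarrow> (nat \<times> nat \<Rightarrow> 'a) set" where
  "qcode n C H = {x. (\<forall>v. v \<notin> tor_V n \<longrightarrow> x v = 0) \<and>
                      (\<forall>c\<in>C. (\<Sum>v\<in>tor_V n. H c v * x v) = 0)}"

definition qdual :: "nat \<Rightarrow> (nat \<times> nat \<Rightarrow> 'a::field) set \<Rightarrow> (nat \<times> nat \<Rightarrow> 'a) set" where
  "qdual n S = {y. (\<forall>v. v \<notin> tor_V n \<longrightarrow> y v = 0) \<and>
                   (\<forall>x\<in>S. (\<Sum>v\<in>tor_V n. x v * y v) = 0)}"

definition is_cycle :: "nat \<Rightarrow> (nat \<times> nat) set \<Rightarrow> nat \<Rightarrow> (nat \<Rightarrow> nat \<times> nat) \<Rightarrow> (nat \<Rightarrow> nat \<times> nat) \<Rightarrow> bool" where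
  "is_cycle n C k vs cs \<longleftrightarrow> 2 \<le> k \<and> inj_on vs {..<k} \<and> inj_on cs {..<k} \<and>
     (\<forall>t<k. vs t \<in> tor_V n \<and> cs t \<in> C \<and> tor_adj n (cs t) (vs t) \<and>
            tor_adj n (cs t) (vs ((t+1) mod k)))"

definition cycle_prod :: "(nat \<times> nat \<Rightarrow> nat \<times> nat \<Rightarrow> 'a::field) \<Rightarrow> nat \<Rightarrow> (nat \<Rightarrow> nat \<times> nat) \<Rightarrow> (nat \<Rightarrow> nat \<times> nat) \<Rightarrow> 'a" where
  "cycle_prod H k vs cs = (\<Prod>t<k. H (cs t) (vs ((t+1) mod k)) * inverse (H (cs t) (vs t)))"

definition emb :: "bit \<Rightarrow> 'a::field" where
  "emb c = (if c = 1 then 1 else 0)"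

definition F2_basis :: "nat \<Rightarrow> (nat \<Rightarrow> 'a::field) \<Rightarrow> bool" where
  "F2_basis m b \<longleftrightarrow> (\<forall>a. \<exists>!c::nat \<Rightarrow> bit. (\<forall>k. m \<le> k \<longrightarrow> c k = 0) \<and> a = (\<Sum>k<m. emb (c k) * b k))"

definition coord :: "nat \<Rightarrow> (nat \<Rightarrow> 'a::field) \<Rightarrow> 'a \<Rightarrow> nat \<Rightarrow> bit" where
  "coord m b a = (THE c. (\<forall>k. m \<le> k \<longrightarrow> c k = 0) \<and> a = (\<Sum>k<m. emb (c k) * b k))"

text \<open>A(h): matrix of multiplication by h; entry (k,l) is the k-th coordinate of h * b l\<close>
definition mulmat :: "nat \<Rightarrow> (nat \<Rightarrow> 'a::field) \<Rightarrow> 'a \<Rightarrow> nat \<Rightarrow> nat \<Rightarrow> bit" where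
  "mulmat m b h k l = coord m b (h * b l) k"

definition bsupp :: "nat \<Rightarrow> nat \<Rightarrow> ((nat \<times> nat) \<times> nat) set" where
  "bsupp n m = tor_V n \<times> {..<m}"

text \<open>ker of hat H_X (blocks A(h)) and of hat H_Z (blocks A(h)^T)\<close>
definition bcodeX :: "nat \<Rightarrow> nat \<Rightarrow> (nat \<Rightarrow> 'a::field) \<Rightarrow> (nat \<times> nat \<Rightarrow> nat \<times> nat \<Rightarrow> 'a)
     \<Rightarrow> ((nat \<times> nat) \<times> nat \<Rightarrow> bit) set" where
  "bcodeX n m b H = {y. (\<forall>p. p \<notin> bsupp n m \<longrightarrow> y p = 0) \<and>
      (\<forall>c\<in>tor_CX n. \<forall>k<m. (\<Sum>(v,l)\<in>bsupp n m. mulmat m b (H c v) k l * y (v,l)) = 0)}"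

definition bcodeZ :: "nat \<Rightarrow> nat \<Rightarrow> (nat \<Rightarrow> 'a::field) \<Rightarrow> (nat \<times> nat \<Rightarrow> nat \<times> nat \<Rightarrow> 'a)
     \<Rightarrow> ((nat \<times> nat) \<times> nat \<Rightarrow> bit) set" where
  "bcodeZ n m b H = {y. (\<forall>p. p \<notin> bsupp n m \<longrightarrow> y p = 0) \<and>
      (\<forall>c\<in>tor_CZ n. \<forall>k<m. (\<Sum>(v,l)\<in>bsupp n m. mulmat m b (H c v) l k * y (v,l)) = 0)}"

definition bdual :: "nat \<Rightarrow> nat \<Rightarrow> ((nat \<times> nat) \<times> nat \<Rightarrow> bit) set \<Rightarrow> ((nat \<times> nat) \<times> nat \<Rightarrow> bit) set" where
  "bdual n m S = {y. (\<forall>p. p \<notin> bsupp n m \<longrightarrow> y p = 0) \<and>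
                     (\<forall>x\<in>S. (\<Sum>p\<in>bsupp n m. x p * y p) = 0)}"

definition hweight :: "nat \<Rightarrow> nat \<Rightarrow> ((nat \<times> nat) \<times> nat \<Rightarrow> bit) \<Rightarrow> nat" where
  "hweight n m y = card {p \<in> bsupp n m. y p \<noteq> 0}"

end

theory Submission
  imports Defs "HOL-Number_Theory.Cong"
begin

text \<open>
  A binary word of weight below n in the kernel of the expanded X-checks is the binary expansion
  of a q-ary word of C_X whose support meets fewer than n rows and fewer than n columns of the
  torus. Cutting the torus along a free row and a free column of suitable parity leaves a planar
  n x n grid whose vertices are X-checks and whose faces are Z-checks, and on which the word is a
  flow. Peeling off one column of faces at a time writes it as a combination of Z-check rows, so
  it is orthogonal to C_Z, and hence the binary word is orthogonal to the kernel of the expanded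
  Z-checks. The Z side is symmetric once words are expanded dually through the form
  a |-> (first coordinate of a), under which multiplication by h acts through the transposed
  block A(h)^T.
\<close>

text \<open>
  The n x n grid of a torus: hedge r s joins vertex r s to vertex r (s + 1), vedge r s joins
  vertex r s to vertex (r + 1) s, indices modulo n. The grid is cut open along the edges
  hedge r (n - 1) and vedge (n - 1) s, leaving the planar faces face r s with r, s < n - 1.
\<close>

locale torus_grid =
  fixes n :: nat and V :: "'v set"
    and Hv Hf :: "'c \<Rightarrow> 'v \<Rightarrow> 'a::field"
    and vertex face :: "nat \<Rightarrow> nat \<Rightarrow> 'c"
    and hedge vedge :: "nat \<Rightarrow> nat \<Rightarrow> 'v"
  assumes n_pos: "0 < n" and finite_V: "finite V"
    and hedge_in_V: "\<And>r s. r < n \<Longrightarrow> s < n \<Longrightarrow> hedge r s \<in> V"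
    and vedge_in_V: "\<And>r s. r < n \<Longrightarrow> s < n \<Longrightarrow> vedge r s \<in> V"
    and hedge_inj: "\<And>r s r' s'. r < n \<Longrightarrow> s < n \<Longrightarrow> r' < n \<Longrightarrow> s' < n \<Longrightarrow>
      hedge r s = hedge r' s' \<Longrightarrow> r = r' \<and> s = s'"
    and vedge_inj: "\<And>r s r' s'. r < n \<Longrightarrow> s < n \<Longrightarrow> r' < n \<Longrightarrow> s' < n \<Longrightarrow>
      vedge r s = vedge r' s' \<Longrightarrow> r = r' \<and> s = s'"
    and hedge_neq_vedge: "\<And>r s r' s'. r < n \<Longrightarrow> s < n \<Longrightarrow> r' < n \<Longrightarrow> s' < n \<Longrightarrow>
      hedge r s \<noteq> vedge r' s'"
    and vertex_support: "\<And>r s v. r < n \<Longrightarrow> s < n \<Longrightarrow> v \<in> V \<Longrightarrow> Hv (vertex r s) v \<noteq> 0 \<Longrightarrow>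
      v = hedge r s \<or> v = hedge r (if s = 0 then n - 1 else s - 1) \<or>
      v = vedge r s \<or> v = vedge (if r = 0 then n - 1 else r - 1) s"
    and vertex_left_nonzero: "\<And>r s. r < n \<Longrightarrow> 0 < s \<Longrightarrow> s < n \<Longrightarrow> Hv (vertex r s) (hedge r (s - 1)) \<noteq> 0"
    and vertex_up_nonzero: "\<And>r s. 0 < r \<Longrightarrow> r < n \<Longrightarrow> s < n \<Longrightarrow> Hv (vertex r s) (vedge (r - 1) s) \<noteq> 0"
    and face_support: "\<And>r s v. r + 1 < n \<Longrightarrow> s + 1 < n \<Longrightarrow> v \<in> V \<Longrightarrow> Hf (face r s) v \<noteq> 0 \<Longrightarrow>
      v = hedge r s \<or> v = hedge (r + 1) s \<or> v = vedge r s \<or> v = vedge r (s + 1)"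
    and face_right_nonzero: "\<And>r s. r + 1 < n \<Longrightarrow> s + 1 < n \<Longrightarrow> Hf (face r s) (vedge r (s + 1)) \<noteq> 0"
    and vertex_face_orthogonal: "\<And>r s r' s'. r < n \<Longrightarrow> s < n \<Longrightarrow> r' + 1 < n \<Longrightarrow> s' + 1 < n \<Longrightarrow>
      (\<Sum>v\<in>V. Hv (vertex r s) v * Hf (face r' s') v) = 0"
begin

definition grid_flow :: "('v \<Rightarrow> 'a) \<Rightarrow> bool" where
  "grid_flow X \<longleftrightarrow> (\<forall>r<n. \<forall>s<n. (\<Sum>v\<in>V. Hv (vertex r s) v * X v) = 0)"

definition in_face_span :: "('v \<Rightarrow> 'a) \<Rightarrow> bool" where
  "in_face_span X \<longleftrightarrow> (\<exists>a. \<forall>v\<in>V. X v = (\<Sum>r<n-1. \<Sum>s<n-1. a r s * Hf (face r s) v))"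

text \<open>
  For s = 0 these edges form a spanning tree (a comb) of the cut grid, on which a flow vanishes by
  peeling off leaves; for s = n - 1 they are all edges off the cut.
\<close>

definition edges_upto_column :: "nat \<Rightarrow> 'v set" where
  "edges_upto_column s =
     {hedge r t | r t. r < n \<and> t + 1 < n} \<union> {vedge r t | r t. r + 1 < n \<and> t \<le> s}"

lemma hedge_in_edges_upto_column_iff [simp]:
  assumes "r < n" "s < n" "t < n"
  shows "hedge r s \<in> edges_upto_column t \<longleftrightarrow> s + 1 < n"
proof
  show "hedge r s \<in> edges_upto_column t \<Longrightarrow> s + 1 < n"
    using hedge_inj[OF assms(1,2)] hedge_neq_vedge[OF assms(1,2)] assms(3)
    unfolding edges_upto_column_def by (smt (verit) Un_iff add_lessD1 le_less_trans mem_Collect_eq)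
qed (use assms in \<open>auto simp: edges_upto_column_def\<close>)

lemma vedge_in_edges_upto_column_iff [simp]:
  assumes "r < n" "s < n" "t < n"
  shows "vedge r s \<in> edges_upto_column t \<longleftrightarrow> r + 1 < n \<and> s \<le> t"
proof
  show "vedge r s \<in> edges_upto_column t \<Longrightarrow> r + 1 < n \<and> s \<le> t"
    using vedge_inj[OF assms(1,2)] hedge_neq_vedge[where r' = r and s' = s] assms
    unfolding edges_upto_column_def by (smt (verit) Un_iff add_lessD1 le_less_trans mem_Collect_eq)
qed (use assms in \<open>auto simp: edges_upto_column_def\<close>)

lemma edges_upto_column_Suc:
  "edges_upto_column (Suc s) = edges_upto_column s \<union> {vedge r (Suc s) | r. r + 1 < n}"
  unfolding edges_upto_column_def by (auto simp: le_Suc_eq)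

lemma flow_vanishes_at_leaf:
  assumes "grid_flow X" "r < n" "s < n" "e \<in> V" "Hv (vertex r s) e \<noteq> 0"
    and others: "\<And>v. v \<in> V \<Longrightarrow> v \<noteq> e \<Longrightarrow> Hv (vertex r s) v \<noteq> 0 \<Longrightarrow> X v = 0"
  shows "X e = 0"
proof -
  have "(\<Sum>v\<in>V. Hv (vertex r s) v * X v) =
      Hv (vertex r s) e * X e + (\<Sum>v\<in>V - {e}. Hv (vertex r s) v * X v)"
    by (rule sum.remove[OF finite_V \<open>e \<in> V\<close>])
  also have "(\<Sum>v\<in>V - {e}. Hv (vertex r s) v * X v) = 0"
    using others by (intro sum.neutral) auto
  finally have "(\<Sum>v\<in>V. Hv (vertex r s) v * X v) = Hv (vertex r s) e * X e"
    by simp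
  moreover have "(\<Sum>v\<in>V. Hv (vertex r s) v * X v) = 0"
    using assms(1-3) unfolding grid_flow_def by blast
  ultimately show ?thesis using assms(5) by simp
qed

lemma comb_flow_hedge_eq_0:
  assumes flow: "grid_flow X" and supp: "{v \<in> V. X v \<noteq> 0} \<subseteq> edges_upto_column 0"
    and "r < n" "s < n"
  shows "X (hedge r s) = 0"
proof -
  have "\<forall>r<n. X (hedge r s) = 0" if "s \<le> n - 1" for s
    using that
  proof (induction rule: inc_induct)
    case base
    show ?case
    proof (intro allI impI)
      fix r assume "r < n"
      then have "hedge r (n - 1) \<in> V - edges_upto_column 0" using hedge_in_V n_pos by simp
      then show "X (hedge r (n - 1)) = 0" using supp by blast
    qed
  next
    case (step s)
    show ?case
    proof (intro allI impI)
      fix r assume r: "r < n"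
      have s: "Suc s < n" using step.hyps by simp
      show "X (hedge r s) = 0"
      proof (rule flow_vanishes_at_leaf[OF flow r s])
        show "hedge r s \<in> V" "Hv (vertex r (Suc s)) (hedge r s) \<noteq> 0"
          using hedge_in_V vertex_left_nonzero[of r "Suc s"] r s by auto
        fix v assume v: "v \<in> V" "v \<noteq> hedge r s" "Hv (vertex r (Suc s)) v \<noteq> 0"
        have "v = hedge r (Suc s) \<or> v = vedge r (Suc s) \<or> v = vedge (if r = 0 then n - 1 else r - 1) (Suc s)"
          using vertex_support[OF r s v(1,3)] v(2) by auto
        then show "X v = 0"
          using step.IH supp r s v(1) n_pos by (auto split: if_splits)
      qed
    qed
  qed
  then show ?thesis using assms(3,4) by simp
qed

lemma comb_flow_vedge_eq_0:
  assumes flow: "grid_flow X" and supp: "{v \<in> V. X v \<noteq> 0} \<subseteq> edges_upto_column 0"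
    and "r < n"
  shows "X (vedge r 0) = 0"
proof -
  have "X (vedge r 0) = 0" if "r \<le> n - 1" for r
    using that
  proof (induction rule: inc_induct)
    case base
    have "vedge (n - 1) 0 \<in> V - edges_upto_column 0" using vedge_in_V n_pos by simp
    then show ?case using supp by blast
  next
    case (step r)
    have r: "Suc r < n" using step.hyps by simp
    show ?case
    proof (rule flow_vanishes_at_leaf[OF flow r n_pos])
      show "vedge r 0 \<in> V" "Hv (vertex (Suc r) 0) (vedge r 0) \<noteq> 0"
        using vedge_in_V vertex_up_nonzero[of "Suc r" 0] r n_pos by auto
      fix v assume v: "v \<in> V" "v \<noteq> vedge r 0" "Hv (vertex (Suc r) 0) v \<noteq> 0"
      then have "v = hedge (Suc r) 0 \<or> v = hedge (Suc r) (n - 1) \<or> v = vedge (Suc r) 0"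
        using vertex_support[OF r n_pos v(1,3)] by auto
      then show "X v = 0"
        using comb_flow_hedge_eq_0[OF flow supp r] step.IH n_pos by auto
    qed
  qed
  then show ?thesis using assms(3) by simp
qed

lemma comb_flow_eq_0:
  assumes "grid_flow X" "{v \<in> V. X v \<noteq> 0} \<subseteq> edges_upto_column 0" "v \<in> V"
  shows "X v = 0"
proof (rule ccontr)
  assume "X v \<noteq> 0"
  then have "v \<in> edges_upto_column 0" using assms(2,3) by blast
  then show False
    using comb_flow_hedge_eq_0[OF assms(1,2)] comb_flow_vedge_eq_0[OF assms(1,2)] \<open>X v \<noteq> 0\<close>
    unfolding edges_upto_column_def by auto
qed

lemma in_face_span_add:
  assumes "in_face_span X" "in_face_span Y"
  shows "in_face_span (\<lambda>v. X v + Y v)"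
proof -
  obtain a b where "\<forall>v\<in>V. X v = (\<Sum>r<n-1. \<Sum>s<n-1. a r s * Hf (face r s) v)"
    "\<forall>v\<in>V. Y v = (\<Sum>r<n-1. \<Sum>s<n-1. b r s * Hf (face r s) v)"
    using assms unfolding in_face_span_def by blast
  then show ?thesis unfolding in_face_span_def
    by (intro exI[of _ "\<lambda>r s. a r s + b r s"]) (simp add: distrib_right sum.distrib)
qed

lemma in_face_span_face_column:
  assumes "s + 1 < n"
  shows "in_face_span (\<lambda>v. \<Sum>r<n-1. c r * Hf (face r s) v)"
  unfolding in_face_span_def
proof (intro exI[of _ "\<lambda>r t. if t = s then c r else 0"] ballI)
  fix v
  show "(\<Sum>r<n-1. c r * Hf (face r s) v) =
      (\<Sum>r<n-1. \<Sum>t<n-1. (if t = s then c r else 0) * Hf (face r t) v)"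
    using assms by (simp add: if_distrib[of "\<lambda>x. x * _"] sum.delta' less_diff_conv cong: if_cong)
qed

lemma grid_flow_if_in_face_span:
  assumes "in_face_span Z"
  shows "grid_flow Z"
  unfolding grid_flow_def
proof (intro allI impI)
  fix r s assume rs: "r < n" "s < n"
  obtain a where a: "\<forall>v\<in>V. Z v = (\<Sum>r'<n-1. \<Sum>s'<n-1. a r' s' * Hf (face r' s') v)"
    using assms unfolding in_face_span_def by blast
  have "(\<Sum>v\<in>V. Hv (vertex r s) v * Z v) =
      (\<Sum>v\<in>V. \<Sum>r'<n-1. \<Sum>s'<n-1. a r' s' * (Hv (vertex r s) v * Hf (face r' s') v))"
    using a by (simp add: sum_distrib_left mult_ac)
  also have "\<dots> = (\<Sum>r'<n-1. \<Sum>s'<n-1. a r' s' * (\<Sum>v\<in>V. Hv (vertex r s) v * Hf (face r' s') v))"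
    by (simp add: sum_distrib_left sum.swap[of _ V])
  also have "\<dots> = 0"
    using vertex_face_orthogonal[OF rs] by simp
  finally show "(\<Sum>v\<in>V. Hv (vertex r s) v * Z v) = 0" .
qed

lemma grid_flow_diff:
  "grid_flow X \<Longrightarrow> grid_flow Y \<Longrightarrow> grid_flow (\<lambda>v. X v - Y v)"
  by (simp add: grid_flow_def right_diff_distrib sum_subtractf)

lemma face_column_at_right_edge:
  assumes "r + 1 < n" "s + 1 < n"
  shows "(\<Sum>r'<n-1. c r' * Hf (face r' s) (vedge r (s + 1))) = c r * Hf (face r s) (vedge r (s + 1))"
proof -
  have others: "Hf (face r' s) (vedge r (s + 1)) = 0" if "r' \<in> {..<n-1} - {r}" for r'
  proof (rule ccontr)
    have r': "r' + 1 < n" "r' \<noteq> r" using that by auto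
    assume "Hf (face r' s) (vedge r (s + 1)) \<noteq> 0"
    then have "vedge r (s + 1) \<in> {hedge r' s, hedge (r' + 1) s, vedge r' s, vedge r' (s + 1)}"
      using face_support[of r' s "vedge r (s + 1)"] vedge_in_V assms r' by auto
    then show False
      using hedge_neq_vedge[of r' s r "s + 1"] hedge_neq_vedge[of "r' + 1" s r "s + 1"]
        vedge_inj[of r "s + 1" r' s] vedge_inj[of r "s + 1" r' "s + 1"] assms r' by auto
  qed
  have "(\<Sum>r'<n-1. c r' * Hf (face r' s) (vedge r (s + 1))) =
      c r * Hf (face r s) (vedge r (s + 1)) + (\<Sum>r'\<in>{..<n-1} - {r}. c r' * Hf (face r' s) (vedge r (s + 1)))"
    using assms by (intro sum.remove) auto
  also have "(\<Sum>r'\<in>{..<n-1} - {r}. c r' * Hf (face r' s) (vedge r (s + 1))) = 0"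
    by (intro sum.neutral ballI) (metis others mult_zero_right)
  finally show ?thesis by simp
qed

lemma flow_peel_column:
  assumes s: "Suc s < n" and flow: "grid_flow X"
    and supp: "{v \<in> V. X v \<noteq> 0} \<subseteq> edges_upto_column (Suc s)"
  obtains Y where "grid_flow Y" "{v \<in> V. Y v \<noteq> 0} \<subseteq> edges_upto_column s"
    "in_face_span (\<lambda>v. X v - Y v)"
proof -
  define c where "c r = X (vedge r (Suc s)) / Hf (face r s) (vedge r (Suc s))" for r
  define Z where "Z v = (\<Sum>r<n-1. c r * Hf (face r s) v)" for v
  have span_Z: "in_face_span Z"
    unfolding Z_def using s by (intro in_face_span_face_column) simp
  have Z_right: "Z (vedge r (Suc s)) = X (vedge r (Suc s))" if "r + 1 < n" for r
    using face_column_at_right_edge[of r s c] face_right_nonzero[of r s] that s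
    by (simp add: Z_def c_def)
  have supp_Z: "{v \<in> V. Z v \<noteq> 0} \<subseteq> edges_upto_column (Suc s)"
  proof
    fix v assume v: "v \<in> {v \<in> V. Z v \<noteq> 0}"
    then have "(\<Sum>r<n-1. c r * Hf (face r s) v) \<noteq> 0" unfolding Z_def by simp
    then obtain r where "r \<in> {..<n-1}" "c r * Hf (face r s) v \<noteq> 0"
      by (rule sum.not_neutral_contains_not_neutral)
    then have r: "r + 1 < n" "r < n" and "Hf (face r s) v \<noteq> 0" by auto
    then have "v \<in> {hedge r s, hedge (r + 1) s, vedge r s, vedge r (Suc s)}"
      using face_support[of r s v] s v by auto
    then show "v \<in> edges_upto_column (Suc s)" using r s by auto
  qed
  show ?thesis
  proof
    show "grid_flow (\<lambda>v. X v - Z v)"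
      using flow grid_flow_if_in_face_span[OF span_Z] by (rule grid_flow_diff)
    show "in_face_span (\<lambda>v. X v - (X v - Z v))"
      using span_Z by simp
    show "{v \<in> V. X v - Z v \<noteq> 0} \<subseteq> edges_upto_column s"
    proof
      fix v assume v: "v \<in> {v \<in> V. X v - Z v \<noteq> 0}"
      then have "v \<in> edges_upto_column (Suc s)" using supp supp_Z by (cases "X v = 0") auto
      moreover have "v \<notin> {vedge r (Suc s) | r. r + 1 < n}" using v Z_right by auto
      ultimately show "v \<in> edges_upto_column s" unfolding edges_upto_column_Suc by blast
    qed
  qed
qed

lemma flow_in_face_span_if_edges_upto_column:
  assumes "s < n" "grid_flow X" "{v \<in> V. X v \<noteq> 0} \<subseteq> edges_upto_column s"
  shows "in_face_span X"
  using assms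
proof (induction s arbitrary: X)
  case 0
  then show ?case
    unfolding in_face_span_def by (intro exI[of _ "\<lambda>_ _. 0"]) (simp add: comb_flow_eq_0)
next
  case (Suc s)
  obtain Y where Y: "grid_flow Y" "{v \<in> V. Y v \<noteq> 0} \<subseteq> edges_upto_column s"
    "in_face_span (\<lambda>v. X v - Y v)"
    using flow_peel_column[OF Suc.prems] by blast
  have "in_face_span Y" using Suc.IH Y(1,2) Suc.prems(1) by simp
  then have "in_face_span (\<lambda>v. Y v + (X v - Y v))" using in_face_span_add Y(3) by blast
  then show ?case by simp
qed

end

lemma finite_tor_V: "finite (tor_V n)"
  by (rule finite_subset[of _ "{..<2 * n} \<times> {..<2 * n}"]) (auto simp: tor_V_def)

text \<open>
  Cutting the torus along row i and column j, the grid has vertices grid_pt n (i + 1) (j + 1),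
  faces grid_pt n (i + 2) (j + 2), horizontal edges grid_pt n (i + 1) (j + 2) and vertical edges
  grid_pt n (i + 2) (j + 1).
\<close>

definition grid_pt :: "nat \<Rightarrow> nat \<Rightarrow> nat \<Rightarrow> nat \<Rightarrow> nat \<Rightarrow> nat \<times> nat" where
  "grid_pt n i j r s = ((i + 2 * r) mod (2 * n), (j + 2 * s) mod (2 * n))"

lemma double_step_mod_inj:
  fixes i r r' n :: nat
  assumes "r < n" "r' < n" "(i + 2 * r) mod (2 * n) = (i + 2 * r') mod (2 * n)"
  shows "r = r'"
proof -
  have "[2 * r = 2 * r'] (mod 2 * n)"
    using assms(3) cong_add_lcancel_nat[of i "2 * r" "2 * r'"] unfolding cong_def by simp
  then show ?thesis using assms(1,2) by (auto dest: cong_less_modulus_unique_nat)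
qed

lemma grid_pt_eq_iff:
  assumes "r < n" "s < n" "r' < n" "s' < n"
  shows "grid_pt n i j r s = grid_pt n i j r' s' \<longleftrightarrow> r = r' \<and> s = s'"
  using double_step_mod_inj[of r n r' i] double_step_mod_inj[of s n s' j] assms
  by (auto simp: grid_pt_def)

lemma even_fst_grid_pt [simp]: "even (fst (grid_pt n i j r s)) \<longleftrightarrow> even i"
  by (simp add: grid_pt_def dvd_mod_iff)

lemma grid_pt_in_tor_V: "0 < n \<Longrightarrow> even (i + j) \<Longrightarrow> grid_pt n i j r s \<in> tor_V n"
  by (simp add: tor_V_def grid_pt_def dvd_mod_iff)

lemma grid_pt_in_tor_CX: "0 < n \<Longrightarrow> odd i \<Longrightarrow> even j \<Longrightarrow> grid_pt n i j r s \<in> tor_CX n"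
  by (simp add: tor_CX_def grid_pt_def dvd_mod_iff)

lemma grid_pt_in_tor_CZ: "0 < n \<Longrightarrow> even i \<Longrightarrow> odd j \<Longrightarrow> grid_pt n i j r s \<in> tor_CZ n"
  by (simp add: tor_CZ_def grid_pt_def dvd_mod_iff)

lemma double_step_mod_succ:
  fixes i r n :: nat
  shows "((i + 2 * r) mod (2 * n) + 1) mod (2 * n) = (i + 1 + 2 * r) mod (2 * n)"
  by (simp add: mod_Suc_eq)

lemma mod_add_pred:
  fixes x N :: nat
  assumes "0 < N"
  shows "(x mod N + N - 1) mod N = (x + N - 1) mod N"
proof -
  have "x mod N + N - 1 = x mod N + (N - 1)" "x + N - 1 = x + (N - 1)" using assms by auto
  then show ?thesis by (simp add: mod_add_left_eq)
qed

lemma double_step_mod_pred: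
  fixes i r n :: nat
  assumes "0 < n"
  shows "((i + 1 + 2 * r) mod (2 * n) + 2 * n - 1) mod (2 * n) = (i + 2 * r) mod (2 * n)"
proof -
  have "i + 1 + 2 * r + 2 * n - 1 = (i + 2 * r) + 2 * n" by simp
  then show ?thesis using mod_add_pred[of "2 * n" "i + 1 + 2 * r"] assms by simp
qed

lemma double_step_mod_wrap:
  fixes i r n :: nat
  assumes "0 < n" "r < n"
  shows "(i + 2 + 2 * (if r = 0 then n - 1 else r - 1)) mod (2 * n) = (i + 2 * r) mod (2 * n)"
proof -
  have unfolded: "i + 2 + 2 * (if r = 0 then n - 1 else r - 1) = i + 2 * r + (if r = 0 then 2 * n else 0)"
    using assms by auto
  have "(i + 2 * r + (if r = 0 then 2 * n else 0)) mod (2 * n) = (i + 2 * r) mod (2 * n)"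
    by simp
  then show ?thesis by (simp only: unfolded)
qed

lemma tor_adj_grid_vertex:
  assumes "0 < n" "r < n" "s < n"
  shows "tor_adj n (grid_pt n (i + 1) (j + 1) r s) v \<longleftrightarrow>
    v \<in> {grid_pt n (i + 1) (j + 2) r s, grid_pt n (i + 1) (j + 2) r (if s = 0 then n - 1 else s - 1),
         grid_pt n (i + 2) (j + 1) r s, grid_pt n (i + 2) (j + 1) (if r = 0 then n - 1 else r - 1) s}"
  using double_step_mod_succ[of "i + 1" r n] double_step_mod_succ[of "j + 1" s n]
    double_step_mod_pred[OF assms(1), of i r] double_step_mod_pred[OF assms(1), of j s]
    double_step_mod_wrap[OF assms(1,2), of i] double_step_mod_wrap[OF assms(1,3), of j]
  unfolding tor_adj_def grid_pt_def by (auto simp: ac_simps)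

lemma tor_adj_grid_face:
  assumes "0 < n"
  shows "tor_adj n (grid_pt n (i + 2) (j + 2) r s) v \<longleftrightarrow>
    v \<in> {grid_pt n (i + 1) (j + 2) r s, grid_pt n (i + 1) (j + 2) (r + 1) s,
         grid_pt n (i + 2) (j + 1) r s, grid_pt n (i + 2) (j + 1) r (s + 1)}"
  using double_step_mod_succ[of "i + 2" r n] double_step_mod_succ[of "j + 2" s n]
    double_step_mod_pred[OF assms(1), of "i + 1" r] double_step_mod_pred[OF assms(1), of "j + 1" s]
  unfolding tor_adj_def grid_pt_def by (auto simp: ac_simps)

lemma exists_double_step_mod:
  fixes i y n :: nat
  assumes "y < 2 * n" "even (i + y)"
  shows "\<exists>r<n. (i + 2 * r) mod (2 * n) = y"
proof -
  define d where "d = (y + 2 * n - i mod (2 * n)) mod (2 * n)"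
  have "even (y + 2 * n - i mod (2 * n))"
    using assms by (metis dvd_mod dvd_mod_imp_dvd even_add even_diff_nat even_mult_iff even_numeral)
  then have "even d" unfolding d_def by (simp add: dvd_mod_iff)
  have "(i + d) mod (2 * n) = (i mod (2 * n) + (y + 2 * n - i mod (2 * n))) mod (2 * n)"
    unfolding d_def by (simp add: mod_add_left_eq mod_add_right_eq)
  also have "i mod (2 * n) + (y + 2 * n - i mod (2 * n)) = y + 2 * n"
    using mod_less_divisor[of "2 * n" i] assms(1) by linarith
  finally have "(i + 2 * (d div 2)) mod (2 * n) = y"
    using \<open>even d\<close> assms(1) by simp
  moreover have "d < 2 * n" unfolding d_def using assms(1) by simp
  then have "d div 2 < n" by presburger
  ultimately show ?thesis by blast
qed

lemma tor_V_covered_by_grid_edges: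
  assumes "0 < n" "odd (i + j)" "v \<in> tor_V n"
  shows "\<exists>r<n. \<exists>s<n. v = grid_pt n (i + 1) (j + 2) r s \<or> v = grid_pt n (i + 2) (j + 1) r s"
proof -
  obtain x y where v: "v = (x, y)" "x < 2 * n" "y < 2 * n" "even (x + y)"
    using assms(3) unfolding tor_V_def by auto
  show ?thesis
  proof (cases "even (i + 1 + x)")
    case True
    moreover have "even (j + 2 + y)" using True assms(2) v(4) by presburger
    ultimately show ?thesis
      using exists_double_step_mod[OF v(2), of "i + 1"] exists_double_step_mod[OF v(3), of "j + 2"] v(1)
      unfolding grid_pt_def by blast
  next
    case False
    then have "even (i + 2 + x)" "even (j + 1 + y)" using assms(2) v(4) by presburger+
    then show ?thesis
      using exists_double_step_mod[OF v(2), of "i + 2"] exists_double_step_mod[OF v(3), of "j + 1"] v(1)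
      unfolding grid_pt_def by blast
  qed
qed

lemma grid_pt_last_row: "0 < n \<Longrightarrow> i < 2 * n \<Longrightarrow> fst (grid_pt n (i + 2) j (n - 1) s) = i"
  and grid_pt_last_column: "0 < n \<Longrightarrow> j < 2 * n \<Longrightarrow> snd (grid_pt n i (j + 2) r (n - 1)) = j"
  using double_step_mod_wrap[of n 0 i] double_step_mod_wrap[of n 0 j] by (simp_all add: grid_pt_def)

lemma torus_grid_cut:
  assumes n: "0 < n" and ij: "odd (i + j)"
    and vertex_in_P: "\<And>r s. grid_pt n (i + 1) (j + 1) r s \<in> P"
    and face_in_Q: "\<And>r s. grid_pt n (i + 2) (j + 2) r s \<in> Q"
    and HP: "labeling n P HP" and HQ: "labeling n Q HQ"
    and orth: "\<forall>p\<in>P. \<forall>q\<in>Q. (\<Sum>v\<in>tor_V n. HP p v * HQ q v) = 0"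
  shows "torus_grid n (tor_V n) HP HQ (grid_pt n (i + 1) (j + 1)) (grid_pt n (i + 2) (j + 2))
    (grid_pt n (i + 1) (j + 2)) (grid_pt n (i + 2) (j + 1))"
proof unfold_locales
  have edges_in_V: "grid_pt n (i + 1) (j + 2) r s \<in> tor_V n" "grid_pt n (i + 2) (j + 1) r s \<in> tor_V n" for r s
    using ij by (auto intro!: grid_pt_in_tor_V[OF n])
  then show "grid_pt n (i + 1) (j + 2) r s \<in> tor_V n" "grid_pt n (i + 2) (j + 1) r s \<in> tor_V n" for r s
    by blast+
  show "finite (tor_V n)" by (rule finite_tor_V)
  show "0 < n" by fact
  show "grid_pt n (i + 1) (j + 2) r s = grid_pt n (i + 1) (j + 2) r' s' \<Longrightarrow> r = r' \<and> s = s'"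
    "grid_pt n (i + 2) (j + 1) r s = grid_pt n (i + 2) (j + 1) r' s' \<Longrightarrow> r = r' \<and> s = s'"
    if "r < n" "s < n" "r' < n" "s' < n" for r s r' s'
    using grid_pt_eq_iff[OF that] by blast+
  show "grid_pt n (i + 1) (j + 2) r s \<noteq> grid_pt n (i + 2) (j + 1) r' s'" for r s r' s'
  proof
    assume "grid_pt n (i + 1) (j + 2) r s = grid_pt n (i + 2) (j + 1) r' s'"
    then have "even (fst (grid_pt n (i + 1) (j + 2) r s)) = even (fst (grid_pt n (i + 2) (j + 1) r' s'))"
      by (simp only:)
    then show False by simp
  qed
  show "v = grid_pt n (i + 1) (j + 2) r s \<or> v = grid_pt n (i + 1) (j + 2) r (if s = 0 then n - 1 else s - 1) \<or>
      v = grid_pt n (i + 2) (j + 1) r s \<or> v = grid_pt n (i + 2) (j + 1) (if r = 0 then n - 1 else r - 1) s"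
    if "r < n" "s < n" "v \<in> tor_V n" "HP (grid_pt n (i + 1) (j + 1) r s) v \<noteq> 0" for r s v
    using that HP vertex_in_P tor_adj_grid_vertex[OF n that(1,2)] unfolding labeling_def by blast
  show "HP (grid_pt n (i + 1) (j + 1) r s) (grid_pt n (i + 1) (j + 2) r (s - 1)) \<noteq> 0"
    if "r < n" "0 < s" "s < n" for r s
    using that HP vertex_in_P edges_in_V tor_adj_grid_vertex[OF n that(1,3)] unfolding labeling_def by simp
  show "HP (grid_pt n (i + 1) (j + 1) r s) (grid_pt n (i + 2) (j + 1) (r - 1) s) \<noteq> 0"
    if "0 < r" "r < n" "s < n" for r s
    using that HP vertex_in_P edges_in_V tor_adj_grid_vertex[OF n that(2,3)] unfolding labeling_def by simp
  show "v = grid_pt n (i + 1) (j + 2) r s \<or> v = grid_pt n (i + 1) (j + 2) (r + 1) s \<or>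
      v = grid_pt n (i + 2) (j + 1) r s \<or> v = grid_pt n (i + 2) (j + 1) r (s + 1)"
    if "r + 1 < n" "s + 1 < n" "v \<in> tor_V n" "HQ (grid_pt n (i + 2) (j + 2) r s) v \<noteq> 0" for r s v
    using that HQ face_in_Q tor_adj_grid_face[OF n] unfolding labeling_def by auto
  show "HQ (grid_pt n (i + 2) (j + 2) r s) (grid_pt n (i + 2) (j + 1) r (s + 1)) \<noteq> 0"
    if "r + 1 < n" "s + 1 < n" for r s
    using that HQ face_in_Q edges_in_V tor_adj_grid_face[OF n] unfolding labeling_def by simp
  show "(\<Sum>v\<in>tor_V n. HP (grid_pt n (i + 1) (j + 1) r s) v * HQ (grid_pt n (i + 2) (j + 2) r' s') v) = 0"
    if "r < n" "s < n" "r' + 1 < n" "s' + 1 < n" for r s r' s'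
    using that orth vertex_in_P face_in_Q by simp
qed


lemma torus_flow_in_face_span:
  assumes n: "0 < n" and i: "i < 2 * n" and j: "j < 2 * n" and ij: "odd (i + j)"
    and vertex_in_P: "\<And>r s. grid_pt n (i + 1) (j + 1) r s \<in> P"
    and face_in_Q: "\<And>r s. grid_pt n (i + 2) (j + 2) r s \<in> Q"
    and HP: "labeling n P HP" and HQ: "labeling n Q HQ"
    and orth: "\<forall>p\<in>P. \<forall>q\<in>Q. (\<Sum>v\<in>tor_V n. HP p v * HQ q v) = 0"
    and X: "X \<in> qcode n P HP"
    and cut: "\<forall>v\<in>tor_V n. X v \<noteq> 0 \<longrightarrow> fst v \<noteq> i \<and> snd v \<noteq> j"
  shows "\<exists>a. \<forall>v\<in>tor_V n. X v = (\<Sum>r<n-1. \<Sum>s<n-1. a r s * HQ (grid_pt n (i + 2) (j + 2) r s) v)"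
proof -
  interpret torus_grid n "tor_V n" HP HQ "grid_pt n (i + 1) (j + 1)" "grid_pt n (i + 2) (j + 2)"
    "grid_pt n (i + 1) (j + 2)" "grid_pt n (i + 2) (j + 1)"
    using torus_grid_cut[OF n ij vertex_in_P face_in_Q HP HQ orth] .
  have "grid_flow X" using X vertex_in_P unfolding grid_flow_def qcode_def by blast
  moreover have "{v \<in> tor_V n. X v \<noteq> 0} \<subseteq> edges_upto_column (n - 1)"
  proof
    fix v assume v: "v \<in> {v \<in> tor_V n. X v \<noteq> 0}"
    then obtain r s where rs: "r < n" "s < n"
      "v = grid_pt n (i + 1) (j + 2) r s \<or> v = grid_pt n (i + 2) (j + 1) r s"
      using tor_V_covered_by_grid_edges[OF n ij] by blast
    then show "v \<in> edges_upto_column (n - 1)"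
    proof (elim disjE)
      assume "v = grid_pt n (i + 1) (j + 2) r s"
      moreover have "s \<noteq> n - 1" using calculation v cut grid_pt_last_column[OF n j] by auto
      then have "s + 1 < n" using rs(2) by linarith
      ultimately show ?thesis using hedge_in_edges_upto_column_iff[of r s "n - 1"] rs by simp
    next
      assume "v = grid_pt n (i + 2) (j + 1) r s"
      moreover have "r \<noteq> n - 1" using calculation v cut grid_pt_last_row[OF n i] by auto
      then have "r + 1 < n" using rs(1) by linarith
      ultimately show ?thesis using vedge_in_edges_upto_column_iff[of r s "n - 1"] rs by simp
    qed
  qed
  ultimately show ?thesis
    using flow_in_face_span_if_edges_upto_column[of "n - 1" X] n unfolding in_face_span_def by simp
qed

lemma exists_index_with_parity_avoiding:
  fixes A :: "nat set"
  assumes "finite A" "card A < n"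
  shows "\<exists>i<2 * n. (even i \<longleftrightarrow> e) \<and> i \<notin> A"
proof (rule ccontr)
  define f where "f k = 2 * k + (if e then 0 else 1)" for k :: nat
  assume none: "\<not> ?thesis"
  have "f k \<in> A" if "k < n" for k
  proof -
    have "f k < 2 * n" "even (f k) \<longleftrightarrow> e" using that unfolding f_def by auto
    then show ?thesis using none by blast
  qed
  then have "f ` {..<n} \<subseteq> A" by blast
  moreover have "inj_on f {..<n}" unfolding f_def by (rule inj_onI) auto
  ultimately have "n \<le> card A"
    using card_mono[OF assms(1)] card_image[of f "{..<n}"] by (metis card_lessThan)
  with assms(2) show False by simp
qed

lemma exists_cut_avoiding:
  assumes n: "0 < n"
    and PQ: "(P, Q) = (tor_CX n, tor_CZ n) \<or> (P, Q) = (tor_CZ n, tor_CX n)"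
    and S: "finite S" "card S < n"
  obtains i j where "i < 2 * n" "j < 2 * n" "odd (i + j)" "i \<notin> fst ` S" "j \<notin> snd ` S"
    "\<And>r s. grid_pt n (i + 1) (j + 1) r s \<in> P" "\<And>r s. grid_pt n (i + 2) (j + 2) r s \<in> Q"
proof -
  have "card (fst ` S) < n" "card (snd ` S) < n"
    using S card_image_le[of S fst] card_image_le[of S snd] by linarith+
  then obtain i j where ij: "i < 2 * n" "j < 2 * n" "i \<notin> fst ` S" "j \<notin> snd ` S"
    and parity: "even i \<longleftrightarrow> P = tor_CX n" "even j \<longleftrightarrow> P \<noteq> tor_CX n"
    using exists_index_with_parity_avoiding[of "fst ` S" n "P = tor_CX n"]
      exists_index_with_parity_avoiding[of "snd ` S" n "P \<noteq> tor_CX n"] S(1) by blast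
  have "(1, 0) \<in> tor_CX n" "(1, 0) \<notin> tor_CZ n"
    using n by (auto simp: tor_CX_def tor_CZ_def)
  with PQ consider "P = tor_CX n" "Q = tor_CZ n" "even i" "odd j"
    | "P = tor_CZ n" "Q = tor_CX n" "odd i" "even j"
    using parity by auto
  then have "grid_pt n (i + 1) (j + 1) r s \<in> P" "grid_pt n (i + 2) (j + 2) r s \<in> Q" for r s
    by (cases; simp add: grid_pt_in_tor_CX[OF n] grid_pt_in_tor_CZ[OF n])+
  moreover have "odd (i + j)" using parity by auto
  ultimately show ?thesis using that ij by blast
qed

lemma row_combination_in_qdual:
  assumes "\<forall>v. v \<notin> tor_V n \<longrightarrow> Y v = 0"
    and Y: "\<forall>v\<in>tor_V n. Y v = (\<Sum>r<k. \<Sum>s<k. a r s * H (g r s) v)"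
    and g: "\<And>r s. g r s \<in> C"
  shows "Y \<in> qdual n (qcode n C H)"
  unfolding qdual_def
proof (intro CollectI conjI ballI)
  show "\<forall>v. v \<notin> tor_V n \<longrightarrow> Y v = 0" by fact
  fix U assume U: "U \<in> qcode n C H"
  have "(\<Sum>v\<in>tor_V n. U v * Y v) = (\<Sum>v\<in>tor_V n. \<Sum>r<k. \<Sum>s<k. a r s * (H (g r s) v * U v))"
    using Y by (simp add: sum_distrib_left mult_ac)
  also have "\<dots> = (\<Sum>r<k. \<Sum>s<k. a r s * (\<Sum>v\<in>tor_V n. H (g r s) v * U v))"
    by (simp add: sum_distrib_left sum.swap[of _ "tor_V n"])
  also have "\<dots> = 0"
    using U g unfolding qcode_def by simp
  finally show "(\<Sum>v\<in>tor_V n. U v * Y v) = 0" .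
qed

lemma low_weight_qcode_word_in_qdual:
  assumes n: "0 < n"
    and PQ: "(P, Q) = (tor_CX n, tor_CZ n) \<or> (P, Q) = (tor_CZ n, tor_CX n)"
    and HP: "labeling n P HP" and HQ: "labeling n Q HQ"
    and orth: "\<forall>p\<in>P. \<forall>q\<in>Q. (\<Sum>v\<in>tor_V n. HP p v * HQ q v) = 0"
    and Y: "Y \<in> qcode n P HP" and small: "card {v \<in> tor_V n. Y v \<noteq> 0} < n"
  shows "Y \<in> qdual n (qcode n Q HQ)"
proof -
  have "finite {v \<in> tor_V n. Y v \<noteq> 0}" using finite_tor_V by simp
  then obtain i j where ij: "i < 2 * n" "j < 2 * n" "odd (i + j)"
    and cut: "i \<notin> fst ` {v \<in> tor_V n. Y v \<noteq> 0}" "j \<notin> snd ` {v \<in> tor_V n. Y v \<noteq> 0}"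
    and vertex_in_P: "\<And>r s. grid_pt n (i + 1) (j + 1) r s \<in> P"
    and face_in_Q: "\<And>r s. grid_pt n (i + 2) (j + 2) r s \<in> Q"
    using exists_cut_avoiding[OF n PQ _ small] by blast
  have "\<forall>v\<in>tor_V n. Y v \<noteq> 0 \<longrightarrow> fst v \<noteq> i \<and> snd v \<noteq> j"
    using cut by force
  then obtain a where "\<forall>v\<in>tor_V n. Y v = (\<Sum>r<n-1. \<Sum>s<n-1. a r s * HQ (grid_pt n (i + 2) (j + 2) r s) v)"
    using torus_flow_in_face_span[OF n ij vertex_in_P face_in_Q HP HQ orth Y] by blast
  moreover have "\<forall>v. v \<notin> tor_V n \<longrightarrow> Y v = 0" using Y unfolding qcode_def by blast
  ultimately show ?thesis using face_in_Q by (intro row_combination_in_qdual)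
qed

lemma card_support_le_hweight:
  assumes "\<And>v. v \<in> tor_V n \<Longrightarrow> f v \<noteq> 0 \<Longrightarrow> \<exists>l<m. y (v, l) \<noteq> 0"
  shows "card {v \<in> tor_V n. f v \<noteq> 0} \<le> hweight n m y"
proof -
  let ?T = "{p \<in> bsupp n m. y p \<noteq> 0}"
  have "finite ?T" unfolding bsupp_def using finite_tor_V by simp
  have "{v \<in> tor_V n. f v \<noteq> 0} \<subseteq> fst ` ?T"
    using assms unfolding bsupp_def by force
  then have "card {v \<in> tor_V n. f v \<noteq> 0} \<le> card (fst ` ?T)"
    using \<open>finite ?T\<close> by (simp add: card_mono)
  also have "\<dots> \<le> card ?T" using \<open>finite ?T\<close> by (rule card_image_le)
  finally show ?thesis unfolding hweight_def .
qed

lemma rows_orthogonal_if_qdual_subset: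
  assumes "qdual n (qcode n Q HQ) \<subseteq> qcode n P HP"
  shows "\<forall>p\<in>P. \<forall>q\<in>Q. (\<Sum>v\<in>tor_V n. HP p v * HQ q v) = 0"
proof (intro ballI)
  fix p q assume p: "p \<in> P" and q: "q \<in> Q"
  define row where "row v = (if v \<in> tor_V n then HQ q v else 0)" for v
  have "row \<in> qdual n (qcode n Q HQ)"
    using q unfolding qdual_def qcode_def row_def by (simp add: mult.commute)
  then have "row \<in> qcode n P HP" using assms by blast
  then show "(\<Sum>v\<in>tor_V n. HP p v * HQ q v) = 0"
    using p unfolding qcode_def row_def by simp
qed

lemma sum_bsupp: "(\<Sum>p\<in>bsupp n m. f p) = (\<Sum>v\<in>tor_V n. \<Sum>l<m. f (v, l))"
  unfolding bsupp_def by (simp add: sum.cartesian_product)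

lemma of_nat_CARD_eq_0: "of_nat (card (UNIV :: 'a set)) = (0::'a::{comm_ring_1,finite})"
proof -
  have "bij (\<lambda>x::'a. x + 1)"
    by (rule bij_betw_byWitness[where f' = "\<lambda>x. x - 1"]) auto
  then have "(\<Sum>x\<in>UNIV. x + 1) = (\<Sum>x\<in>UNIV. x :: 'a)"
    by (rule sum.reindex_bij_betw[of _ UNIV UNIV "\<lambda>x. x"])
  then show ?thesis by (simp add: sum.distrib)
qed

lemma one_plus_one_eq_0_if_card_eq_power_of_two:
  assumes "card (UNIV :: 'a set) = 2 ^ m"
  shows "1 + 1 = (0::'a::{field,finite})"
proof -
  have "of_nat (2 ^ m) = (0::'a)" using of_nat_CARD_eq_0[where 'a = 'a] assms by simp
  then have "(2::'a) = 0" by simp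
  then show ?thesis by simp
qed

locale F2_expansion =
  fixes m :: nat and b :: "nat \<Rightarrow> 'a::{field,finite}"
  assumes basis: "F2_basis m b" and char_two: "(1::'a) + 1 = 0"
begin

lemma emb_add: "(emb (c + d) :: 'a) = emb c + emb d"
  using char_two by (cases c; cases d) (simp_all add: emb_def)

lemma emb_simps [simp]: "(emb 0 :: 'a) = 0" "(emb 1 :: 'a) = 1"
  by (simp_all add: emb_def)

lemma coord_spec: "(\<forall>k. m \<le> k \<longrightarrow> coord m b a k = 0) \<and> a = (\<Sum>k<m. emb (coord m b a k) * b k)"
  using basis theI'[of "\<lambda>c. (\<forall>k. m \<le> k \<longrightarrow> c k = 0) \<and> a = (\<Sum>k<m. emb (c k) * b k)"]
  unfolding F2_basis_def coord_def by blast

lemma coord_unique: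
  assumes "\<forall>k. m \<le> k \<longrightarrow> c k = 0" "a = (\<Sum>k<m. emb (c k) * b k)"
  shows "coord m b a = c"
  using basis assms coord_spec[of a] unfolding F2_basis_def by blast

lemma m_pos: "0 < m"
proof (rule ccontr)
  assume "\<not> 0 < m"
  then have "(1::'a) = 0" using coord_spec[of 1] by simp
  then show False by simp
qed

lemma coord_add: "coord m b (a + a') k = coord m b a k + coord m b a' k"
proof -
  have "coord m b (a + a') = (\<lambda>k. coord m b a k + coord m b a' k)"
  proof (rule coord_unique)
    show "\<forall>k. m \<le> k \<longrightarrow> coord m b a k + coord m b a' k = 0" using coord_spec by simp
    have "a + a' = (\<Sum>k<m. emb (coord m b a k) * b k + emb (coord m b a' k) * b k)"
      using coord_spec[of a] coord_spec[of a'] by (simp add: sum.distrib)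
    then show "a + a' = (\<Sum>k<m. emb (coord m b a k + coord m b a' k) * b k)"
      by (simp only: emb_add distrib_right)
  qed
  then show ?thesis by simp
qed

lemma coord_zero [simp]: "coord m b 0 k = 0"
  using coord_unique[of "\<lambda>_. 0" 0] by simp

lemma coord_sum: "coord m b (\<Sum>i\<in>I. f i) k = (\<Sum>i\<in>I. coord m b (f i) k)"
  by (induction I rule: infinite_finite_induct) (simp_all add: coord_add)

lemma coord_emb_mult: "coord m b (emb c * a) k = c * coord m b a k"
  by (cases c) simp_all

lemma coord_mult: "coord m b (w * a) k = (\<Sum>l<m. coord m b a l * coord m b (w * b l) k)"
proof -
  have "w * a = (\<Sum>l<m. emb (coord m b a l) * (w * b l))"
    using coord_spec[of a] by (metis (no_types, lifting) mult.left_commute sum.cong sum_distrib_left)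
  then show ?thesis by (simp add: coord_sum coord_emb_mult)
qed

lemma eq_0_if_coord_eq_0: "(\<And>k. k < m \<Longrightarrow> coord m b a k = 0) \<Longrightarrow> a = 0"
  using coord_spec[of a] by simp

lemma coord_basis_0: "coord m b (b 0) 0 = 1"
proof -
  have "coord m b (b 0) = (\<lambda>k. if k = 0 then 1 else 0)"
    using m_pos by (intro coord_unique) (simp_all add: if_distrib[of emb] if_distrib[of "\<lambda>x. x * _"] cong: if_cong)
  then show ?thesis by simp
qed

lemma dual_coords_inj:
  assumes "\<And>l. l < m \<Longrightarrow> coord m b (w * b l) 0 = coord m b (w' * b l) 0"
  shows "w = w'"
proof (rule ccontr)
  assume "w \<noteq> w'"
  have "coord m b ((w - w') * b l) 0 = 0" if "l < m" for l
  proof -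
    have "coord m b (w * b l) 0 = coord m b ((w - w') * b l) 0 + coord m b (w' * b l) 0"
      by (metis coord_add diff_add_cancel distrib_right)
    then show ?thesis using assms[OF that] by (metis add_cancel_left_left)
  qed
  then have "coord m b ((w - w') * (inverse (w - w') * b 0)) 0 = 0"
    by (subst coord_mult) simp
  moreover have "(w - w') * (inverse (w - w') * b 0) = b 0"
    using \<open>w \<noteq> w'\<close> by (simp add: mult.assoc[symmetric])
  ultimately show False using coord_basis_0 by simp
qed

lemma dual_coords_surj: "\<exists>w. \<forall>l<m. coord m b (w * b l) 0 = c l"
proof -
  let ?S = "{c::nat \<Rightarrow> bit. \<forall>k. m \<le> k \<longrightarrow> c k = 0}"
  define f where "f w = (\<lambda>l. if l < m then coord m b (w * b l) 0 else 0)" for w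
  have "inj f"
    by (rule injI, rule dual_coords_inj) (metis f_def)
  have range_f: "range f \<subseteq> ?S" unfolding f_def by auto
  have S_eq: "?S = range (coord m b)"
  proof
    show "?S \<subseteq> range (coord m b)"
      by (metis (mono_tags, lifting) coord_unique mem_Collect_eq rangeI subsetI)
    show "range (coord m b) \<subseteq> ?S" using coord_spec by blast
  qed
  have "card ?S \<le> card (UNIV :: 'a set)"
    unfolding S_eq by (rule card_image_le) simp
  also have "\<dots> = card (range f)" using \<open>inj f\<close> by (simp add: card_image)
  moreover have "card (range f) \<le> card ?S"
    using range_f S_eq by (simp add: card_mono)
  ultimately have "range f = ?S"
    using card_subset_eq[OF _ range_f] S_eq by simp
  moreover have "(\<lambda>l. if l < m then c l else 0) \<in> ?S" by auto
  ultimately obtain w where "f w = (\<lambda>l. if l < m then c l else 0)" by (metis imageE)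
  then show ?thesis unfolding f_def by (metis)
qed

definition lift :: "((nat \<times> nat) \<times> nat \<Rightarrow> bit) \<Rightarrow> nat \<times> nat \<Rightarrow> 'a" where
  "lift x v = (\<Sum>l<m. emb (x (v, l)) * b l)"

text \<open>
  The form a |-> coord m b a 0 is nondegenerate, so dual_lift z v is the unique w representing the
  binary vector z (v, -) against the basis; multiplication by h then acts on these representatives
  through A(h)^T, which turns the kernel of the expanded Z-checks into C_Z.
\<close>

definition dual_lift :: "((nat \<times> nat) \<times> nat \<Rightarrow> bit) \<Rightarrow> nat \<times> nat \<Rightarrow> 'a" where
  "dual_lift z v = (SOME w. \<forall>l<m. coord m b (w * b l) 0 = z (v, l))"

lemma coord_lift: "(\<And>l. m \<le> l \<Longrightarrow> x (v, l) = 0) \<Longrightarrow> coord m b (lift x v) l = x (v, l)"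
  using coord_unique[of "\<lambda>l. x (v, l)"] unfolding lift_def by simp

lemma coord_dual_lift_mult: "l < m \<Longrightarrow> coord m b (dual_lift z v * b l) 0 = z (v, l)"
  using someI_ex[OF dual_coords_surj[of "\<lambda>l. z (v, l)"]] unfolding dual_lift_def by blast

lemma lift_eq_0: "(\<And>l. l < m \<Longrightarrow> x (v, l) = 0) \<Longrightarrow> lift x v = 0"
  unfolding lift_def by simp

lemma dual_lift_eq_0: "(\<And>l. l < m \<Longrightarrow> z (v, l) = 0) \<Longrightarrow> dual_lift z v = 0"
  by (rule dual_coords_inj) (simp add: coord_dual_lift_mult)

lemma binary_pairing_eq_coord:
  assumes "\<And>p. p \<notin> bsupp n m \<Longrightarrow> x p = 0"
  shows "(\<Sum>p\<in>bsupp n m. x p * z p) = coord m b (\<Sum>v\<in>tor_V n. dual_lift z v * lift x v) 0"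
proof -
  have "coord m b (dual_lift z v * lift x v) 0 = (\<Sum>l<m. x (v, l) * z (v, l))" if "v \<in> tor_V n" for v
  proof -
    have "coord m b (dual_lift z v * lift x v) 0 =
        (\<Sum>l<m. coord m b (lift x v) l * coord m b (dual_lift z v * b l) 0)"
      by (rule coord_mult)
    also have "\<dots> = (\<Sum>l<m. x (v, l) * z (v, l))"
      using assms that by (intro sum.cong) (simp_all add: coord_lift coord_dual_lift_mult bsupp_def)
    finally show ?thesis .
  qed
  then show ?thesis by (simp add: sum_bsupp coord_sum)
qed

lemma lift_in_qcode:
  assumes x: "x \<in> bcodeX n m b H"
  shows "lift x \<in> qcode n (tor_CX n) H"
proof -
  have x0: "x p = 0" if "p \<notin> bsupp n m" for p using x that unfolding bcodeX_def by blast
  have xc: "(\<Sum>(v, l)\<in>bsupp n m. mulmat m b (H c v) k l * x (v, l)) = 0" if "c \<in> tor_CX n" "k < m" for c k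
    using x that unfolding bcodeX_def by blast
  have "(\<Sum>v\<in>tor_V n. H c v * lift x v) = 0" if c: "c \<in> tor_CX n" for c
  proof (rule eq_0_if_coord_eq_0)
    fix k assume "k < m"
    have "coord m b (H c v * lift x v) k = (\<Sum>l<m. mulmat m b (H c v) k l * x (v, l))"
      if "v \<in> tor_V n" for v
    proof -
      have "coord m b (lift x v) l = x (v, l)" for l
        using x0 that by (intro coord_lift) (simp add: bsupp_def)
      then show ?thesis by (simp only: coord_mult[of "H c v" "lift x v" k] mulmat_def mult.commute)
    qed
    then have "coord m b (\<Sum>v\<in>tor_V n. H c v * lift x v) k =
        (\<Sum>(v, l)\<in>bsupp n m. mulmat m b (H c v) k l * x (v, l))"
      by (simp only: coord_sum sum_bsupp prod.case cong: sum.cong)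
    also have "\<dots> = 0"
      using xc c \<open>k < m\<close> by blast
    finally show "coord m b (\<Sum>v\<in>tor_V n. H c v * lift x v) k = 0" .
  qed
  moreover have "lift x v = 0" if "v \<notin> tor_V n" for v
    using x0 that by (intro lift_eq_0) (simp add: bsupp_def)
  ultimately show ?thesis unfolding qcode_def by blast
qed

lemma dual_lift_in_qcode:
  assumes z: "z \<in> bcodeZ n m b H"
  shows "dual_lift z \<in> qcode n (tor_CZ n) H"
proof -
  have z0: "z p = 0" if "p \<notin> bsupp n m" for p using z that unfolding bcodeZ_def by blast
  have zc: "(\<Sum>(v, l)\<in>bsupp n m. mulmat m b (H q v) l k * z (v, l)) = 0" if "q \<in> tor_CZ n" "k < m" for q k
    using z that unfolding bcodeZ_def by blast
  have "(\<Sum>v\<in>tor_V n. H q v * dual_lift z v) = 0" if q: "q \<in> tor_CZ n" for q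
  proof (rule dual_coords_inj)
    fix k assume "k < m"
    have "coord m b (dual_lift z v * (H q v * b k)) 0 = (\<Sum>l<m. mulmat m b (H q v) l k * z (v, l))" for v
      unfolding coord_mult[of "dual_lift z v" "H q v * b k" 0] mulmat_def
      by (intro sum.cong) (simp_all only: lessThan_iff coord_dual_lift_mult)
    moreover have "(\<Sum>v\<in>tor_V n. H q v * dual_lift z v) * b k = (\<Sum>v\<in>tor_V n. dual_lift z v * (H q v * b k))"
      by (simp add: sum_distrib_left sum_distrib_right mult_ac)
    ultimately have "coord m b ((\<Sum>v\<in>tor_V n. H q v * dual_lift z v) * b k) 0 =
        (\<Sum>(v, l)\<in>bsupp n m. mulmat m b (H q v) l k * z (v, l))"
      by (simp only: coord_sum sum_bsupp prod.case)
    also have "\<dots> = 0"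
      using zc q \<open>k < m\<close> by blast
    finally show "coord m b ((\<Sum>v\<in>tor_V n. H q v * dual_lift z v) * b k) 0 = coord m b (0 * b k) 0"
      by simp
  qed
  moreover have "dual_lift z v = 0" if "v \<notin> tor_V n" for v
    using z0 that by (intro dual_lift_eq_0) (simp add: bsupp_def)
  ultimately show ?thesis unfolding qcode_def by blast
qed

lemma low_weight_bcodeX_word_in_bdual:
  assumes n: "0 < n" and HX: "labeling n (tor_CX n) HX" and HZ: "labeling n (tor_CZ n) HZ"
    and orth: "\<forall>p\<in>tor_CX n. \<forall>q\<in>tor_CZ n. (\<Sum>v\<in>tor_V n. HX p v * HZ q v) = 0"
    and x: "x \<in> bcodeX n m b HX" and small: "hweight n m x < n"
  shows "x \<in> bdual n m (bcodeZ n m b HZ)"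
proof -
  have x0: "x p = 0" if "p \<notin> bsupp n m" for p using x that unfolding bcodeX_def by blast
  have "card {v \<in> tor_V n. lift x v \<noteq> 0} < n"
    using card_support_le_hweight[of n "lift x" m x] lift_eq_0 small by (meson le_less_trans)
  then have dual: "lift x \<in> qdual n (qcode n (tor_CZ n) HZ)"
    using low_weight_qcode_word_in_qdual[OF n _ HX HZ orth lift_in_qcode[OF x]] by simp
  show ?thesis unfolding bdual_def
  proof (intro CollectI conjI allI impI ballI)
    show "x p = 0" if "p \<notin> bsupp n m" for p using x0 that .
    fix z assume z: "z \<in> bcodeZ n m b HZ"
    have "(\<Sum>p\<in>bsupp n m. x p * z p) = coord m b (\<Sum>v\<in>tor_V n. dual_lift z v * lift x v) 0"
      by (rule binary_pairing_eq_coord) (rule x0)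
    then have "(\<Sum>p\<in>bsupp n m. z p * x p) = coord m b (\<Sum>v\<in>tor_V n. dual_lift z v * lift x v) 0"
      by (simp only: mult.commute)
    also have "(\<Sum>v\<in>tor_V n. dual_lift z v * lift x v) = 0"
      using dual dual_lift_in_qcode[OF z] unfolding qdual_def by blast
    finally show "(\<Sum>p\<in>bsupp n m. z p * x p) = 0" by simp
  qed
qed

lemma low_weight_bcodeZ_word_in_bdual:
  assumes n: "0 < n" and HX: "labeling n (tor_CX n) HX" and HZ: "labeling n (tor_CZ n) HZ"
    and orth: "\<forall>p\<in>tor_CX n. \<forall>q\<in>tor_CZ n. (\<Sum>v\<in>tor_V n. HX p v * HZ q v) = 0"
    and z: "z \<in> bcodeZ n m b HZ" and small: "hweight n m z < n"
  shows "z \<in> bdual n m (bcodeX n m b HX)"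
proof -
  have orth': "\<forall>p\<in>tor_CZ n. \<forall>q\<in>tor_CX n. (\<Sum>v\<in>tor_V n. HZ p v * HX q v) = 0"
    using orth by (simp add: mult.commute)
  have "card {v \<in> tor_V n. dual_lift z v \<noteq> 0} < n"
    using card_support_le_hweight[of n "dual_lift z" m z] dual_lift_eq_0 small by (meson le_less_trans)
  then have dual: "dual_lift z \<in> qdual n (qcode n (tor_CX n) HX)"
    using low_weight_qcode_word_in_qdual[OF n _ HZ HX orth' dual_lift_in_qcode[OF z]] by simp
  show ?thesis unfolding bdual_def
  proof (intro CollectI conjI allI impI ballI)
    show "z p = 0" if "p \<notin> bsupp n m" for p using z that unfolding bcodeZ_def by blast
    fix x assume x: "x \<in> bcodeX n m b HX"
    then have x0: "x p = 0" if "p \<notin> bsupp n m" for p using that unfolding bcodeX_def by blast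
    have "(\<Sum>v\<in>tor_V n. lift x v * dual_lift z v) = 0"
      using dual lift_in_qcode[OF x] unfolding qdual_def by blast
    then have "(\<Sum>v\<in>tor_V n. dual_lift z v * lift x v) = 0" by (simp add: mult.commute)
    moreover have "(\<Sum>p\<in>bsupp n m. x p * z p) = coord m b (\<Sum>v\<in>tor_V n. dual_lift z v * lift x v) 0"
      by (rule binary_pairing_eq_coord) (rule x0)
    ultimately show "(\<Sum>p\<in>bsupp n m. x p * z p) = 0" by simp
  qed
qed

end

theorem theorem2:
  fixes n m :: nat
    and HX HZ :: "nat \<times> nat \<Rightarrow> nat \<times> nat \<Rightarrow> 'a::{field, finite}"
    and b :: "nat \<Rightarrow> 'a"
  assumes "n \<ge> 2" and "m \<ge> 1" and "card (UNIV :: 'a set) = 2 ^ m"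
    and "labeling n (tor_CX n) HX" and "labeling n (tor_CZ n) HZ"
    and "\<forall>k vs cs. is_cycle n (tor_CX n) k vs cs \<longrightarrow> cycle_prod HX k vs cs = 1"
    and "qdual n (qcode n (tor_CZ n) HZ) \<subseteq> qcode n (tor_CX n) HX"
    and "F2_basis m b"
  shows "(\<forall>x \<in> bcodeX n m b HX - bdual n m (bcodeZ n m b HZ). hweight n m x \<ge> n) \<and>
         (\<forall>x \<in> bcodeZ n m b HZ - bdual n m (bcodeX n m b HX). hweight n m x \<ge> n)"
proof -
  interpret F2_expansion m b
    using assms(8) one_plus_one_eq_0_if_card_eq_power_of_two[OF assms(3)] by unfold_locales
  have n: "0 < n" using assms(1) by simp
  note orth = rows_orthogonal_if_qdual_subset[OF assms(7)]
  show ?thesis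
    using low_weight_bcodeX_word_in_bdual[OF n assms(4,5) orth]
      low_weight_bcodeZ_word_in_bdual[OF n assms(4,5) orth]
    by (meson DiffE not_le)
qed

end
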